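(* Let $Y$ be a positive integrable random variable with mean $m$ and $X=Y-m$. In each of the following cases $X$ is heavy on left: (i) $Y$ has a Gamma distribution with parameters $a,\lambda>0$ (in particular an exponential distribution with parameter $\lambda>0$); (ii) $Y=a\exp(Z)$ with $a>0$ and $Z$ exponential with parameter $\lambda>0$ (Pareto distribution), whenever $Y$ is integrable; (iii) $Y=\exp(Z)$ with $Z\sim\mathcal{N}(\mu,\sigma^2)$, $\mu\in\mathbb{R}$, $\sigma^2>0$ (log-normal distribution).
   Context: For $a>0$ let $T_a(X)=\min(|X|,a)\,\mathrm{sign}(X)$. An integrable random variable $X$ is called heavy on left if $\mathbb{E}[X]=0$ and $\mathbb{E}[T_a(X)]\le0$ for all $a>0$. *)

theory Defs
  imports "HOL-Probability.Probability"
begin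

definition trunc_at :: "real \<Rightarrow> real \<Rightarrow> real" where
  "trunc_at a x = min \<bar>x\<bar> a * sgn x"

definition heavy_on_left :: "'a measure \<Rightarrow> ('a \<Rightarrow> real) \<Rightarrow> bool" where
  "heavy_on_left M X \<longleftrightarrow> integrable M X \<and> (\<integral>\<omega>. X \<omega> \<partial>M) = 0 \<and>
     (\<forall>a>0. (\<integral>\<omega>. trunc_at a (X \<omega>) \<partial>M) \<le> 0)"

definition gamma_density :: "real \<Rightarrow> real \<Rightarrow> real \<Rightarrow> real" where
  "gamma_density a l x =
     (if x \<le> 0 then 0 else l powr a * x powr (a - 1) * exp (- l * x) / Gamma a)"

end

theory Submission
  imports Defs
begin

text \<open>
  Let X be centred and integrable and write h(t) = P(X > t) - P(X < -t) for its tail balance.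
  By Fubini, E[T_c2(X)] - E[T_c1(X)] is the integral of h over [c1, c2], and E[T_n(X)] tends
  to E[X] = 0.  Hence X is heavy on left as soon as h is "single crossing": once h is
  positive at some s \<ge> 0 it stays nonnegative for all t \<ge> s.  (If h \<le> 0 on [0, c] then
  E[T_c(X)] \<le> 0; otherwise h \<ge> 0 beyond c, so E[T_c(X)] \<le> E[T_n(X)] \<rightarrow> 0.)

  For X = Y - m with Y > 0 having a density g, the increments of h compare the mass of g on
  [m + t1, m + t2] with its mass on [m - t2, m - t1].  So h is single crossing whenever g is
  "reflected single crossing": for every centre m, once g(m + u) > g(m - u) it stays \<ge>.
  The theorem follows by checking this shape property for the Gamma density, and for the
  densities of a * exp Z with Z exponential (Pareto) and of exp Z with Z normal (log-normal);
  the latter two densities are obtained by the substitution y = k * exp z.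
\<close>

subsection \<open>Truncation\<close>

lemma trunc_at_0 [simp]: "trunc_at 0 x = 0"
  by (simp add: trunc_at_def)

lemma abs_trunc_at_le_abs: "0 \<le> a \<Longrightarrow> \<bar>trunc_at a x\<bar> \<le> \<bar>x\<bar>"
  by (simp add: trunc_at_def abs_mult abs_sgn_eq)

lemma abs_trunc_at_le_level: "0 \<le> a \<Longrightarrow> \<bar>trunc_at a x\<bar> \<le> a"
  by (simp add: trunc_at_def abs_mult abs_sgn_eq)

lemma trunc_at_measurable [measurable]: "trunc_at a \<in> borel_measurable borel"
  unfolding trunc_at_def by measurable

text \<open>Truncation at level n is the identity once n \<ge> |x|.\<close>
lemma trunc_at_tendsto: "(\<lambda>n. trunc_at (real n) x) \<longlonglongrightarrow> x"
proof (rule tendsto_eventually)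
  show "\<forall>\<^sub>F n in sequentially. trunc_at (real n) x = x"
  proof (rule eventually_sequentiallyI[of "nat \<lceil>\<bar>x\<bar>\<rceil>"])
    fix n assume "nat \<lceil>\<bar>x\<bar>\<rceil> \<le> n"
    then have "\<bar>x\<bar> \<le> real n"
      using real_nat_ceiling_ge[of "\<bar>x\<bar>"] of_nat_mono[of "nat \<lceil>\<bar>x\<bar>\<rceil>" n] by linarith
    then show "trunc_at (real n) x = x"
      by (auto simp: trunc_at_def sgn_if)
  qed
qed

lemma lborel_integral_Icc_below:
  fixes c1 c2 x :: real
  assumes "c1 \<le> c2"
  shows "(\<integral>t. indicator ({c1..c2} \<inter> {..<x}) t \<partial>lborel) = min (max (x - c1) 0) (c2 - c1)"
proof -
  consider "x \<le> c1" | "c1 < x" "x \<le> c2" | "c2 < x" by linarith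
  then show ?thesis
  proof cases
    case 1
    then have "{c1..c2} \<inter> {..<x} = {}" by auto
    then show ?thesis using 1 assms by simp
  next
    case 2
    then have "{c1..c2} \<inter> {..<x} = {c1..<x}" by auto
    then show ?thesis using 2 by (simp add: measure_def)
  next
    case 3
    then have "{c1..c2} \<inter> {..<x} = {c1..c2}" by auto
    then show ?thesis using 3 assms by (simp add: measure_def)
  qed
qed

lemma trunc_at_increment:
  fixes c1 c2 x :: real
  assumes "0 \<le> c1" "c1 \<le> c2"
  shows "trunc_at c2 x - trunc_at c1 x =
    (\<integral>t. indicator ({c1..c2} \<inter> {..<x}) t - indicator ({c1..c2} \<inter> {..<-x}) t \<partial>lborel)"
proof -
  have integrable: "integrable lborel (indicator ({c1..c2} \<inter> {..<y}) :: real \<Rightarrow> real)" for y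
  proof (rule integrable_real_indicator)
    have "emeasure lborel ({c1..c2} \<inter> {..<y}) \<le> emeasure lborel {c1..c2}"
      by (rule emeasure_mono) auto
    then show "emeasure lborel ({c1..c2} \<inter> {..<y}) < \<infinity>"
      using emeasure_lborel_Icc_eq[of c1 c2] by (simp add: le_less_trans)
  qed auto
  have "trunc_at c2 x - trunc_at c1 x =
      min (max (x - c1) 0) (c2 - c1) - min (max (- x - c1) 0) (c2 - c1)"
    using assms by (auto simp: trunc_at_def sgn_if min_def max_def)
  then show ?thesis
    unfolding Bochner_Integration.integral_diff[OF integrable integrable]
      lborel_integral_Icc_below[OF assms(2)] .
qed

subsection \<open>Truncated means and the tail balance\<close>

definition tail_balance :: "'a measure \<Rightarrow> ('a \<Rightarrow> real) \<Rightarrow> real \<Rightarrow> real" where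
  "tail_balance M X t = measure M {\<omega>\<in>space M. t < X \<omega>} - measure M {\<omega>\<in>space M. X \<omega> < - t}"

text \<open>Truncations are bounded, so they are integrable without any moment assumption.\<close>
lemma integrable_trunc_at:
  fixes X :: "'a \<Rightarrow> real"
  assumes "prob_space M" "X \<in> borel_measurable M" "0 \<le> a"
  shows "integrable M (\<lambda>\<omega>. trunc_at a (X \<omega>))"
proof -
  interpret prob_space M by fact
  show ?thesis
    using assms(2,3) abs_trunc_at_le_level[OF assms(3)]
    by (intro integrable_const_bound[where B=a] AE_I2) auto
qed

lemma tail_balance_as_integral:
  fixes X :: "'a \<Rightarrow> real"
  assumes "prob_space M" and [measurable]: "X \<in> borel_measurable M"
  shows "tail_balance M X t =
    (\<integral>\<omega>. indicator {\<omega>\<in>space M. t < X \<omega>} \<omega> - indicator {\<omega>\<in>space M. X \<omega> < -t} \<omega> \<partial>M)"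
proof -
  interpret prob_space M by fact
  have "integrable M (indicator B :: 'a \<Rightarrow> real)" if "B \<in> sets M" for B
    using that by (intro integrable_real_indicator) (auto simp: less_top[symmetric])
  moreover have "{\<omega>\<in>space M. t < X \<omega>} \<in> sets M" "{\<omega>\<in>space M. X \<omega> < -t} \<in> sets M"
    by measurable
  ultimately show ?thesis
    by (simp add: tail_balance_def Int_absorb2 sets.sets_into_space)
qed

text \<open>By Fubini, E[T_c2(X)] - E[T_c1(X)] is the integral of the tail balance over [c1, c2].\<close>
lemma truncated_mean_increment:
  fixes X :: "'a \<Rightarrow> real"
  assumes P: "prob_space M" and X[measurable]: "X \<in> borel_measurable M"
    and c: "0 \<le> c1" "c1 \<le> c2"
  shows "(\<integral>\<omega>. trunc_at c2 (X \<omega>) \<partial>M) - (\<integral>\<omega>. trunc_at c1 (X \<omega>) \<partial>M) =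
    (\<integral>t. indicator {c1..c2} t * tail_balance M X t \<partial>lborel)"
proof -
  interpret prob_space M by (rule P)
  interpret pair_sigma_finite lborel M by unfold_locales
  define f where "f = (\<lambda>(t::real, \<omega>). (if c1 \<le> t \<and> t \<le> c2 \<and> t < X \<omega> then 1 else 0) -
       (if c1 \<le> t \<and> t \<le> c2 \<and> t < - X \<omega> then 1 else (0::real)))"
  have [measurable]: "f \<in> borel_measurable (lborel \<Otimes>\<^sub>M M)"
    unfolding f_def by measurable
  have "(\<integral>\<^sup>+x. ennreal (norm (f x)) \<partial>(lborel \<Otimes>\<^sub>M M)) \<le>
      (\<integral>\<^sup>+x. indicator ({c1..c2} \<times> space M) x \<partial>(lborel \<Otimes>\<^sub>M M))"
    by (rule nn_integral_mono) (auto simp: f_def indicator_def space_pair_measure split: if_splits)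
  also have "\<dots> = emeasure (lborel \<Otimes>\<^sub>M M) ({c1..c2} \<times> space M)"
    by (rule nn_integral_indicator) (rule pair_measureI, auto)
  also have "\<dots> = ennreal (c2 - c1)"
    using c sigma_finite_measure.emeasure_pair_measure_Times[OF prob_space_imp_sigma_finite[OF P],
        of "{c1..c2}" lborel "space M"]
    by (simp add: emeasure_space_1)
  finally have "integrable (lborel \<Otimes>\<^sub>M M) (\<lambda>(t, \<omega>). f (t, \<omega>))"
    by (intro integrableI_bounded) (auto simp: le_less_trans)
  then have "(\<integral>\<omega>. (\<integral>t. f (t, \<omega>) \<partial>lborel) \<partial>M) = (\<integral>t. (\<integral>\<omega>. f (t, \<omega>) \<partial>M) \<partial>lborel)"
    by (intro Fubini_integral[of "\<lambda>t \<omega>. f (t, \<omega>)"]) simp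
  also have "(\<integral>\<omega>. (\<integral>t. f (t, \<omega>) \<partial>lborel) \<partial>M) = (\<integral>\<omega>. trunc_at c2 (X \<omega>) - trunc_at c1 (X \<omega>) \<partial>M)"
  proof (rule Bochner_Integration.integral_cong[OF refl])
    fix \<omega>
    have "(\<lambda>t. f (t, \<omega>)) =
        (\<lambda>t. indicator ({c1..c2} \<inter> {..<X \<omega>}) t - indicator ({c1..c2} \<inter> {..<-X \<omega>}) t)"
      by (auto simp: f_def indicator_def)
    then show "(\<integral>t. f (t, \<omega>) \<partial>lborel) = trunc_at c2 (X \<omega>) - trunc_at c1 (X \<omega>)"
      using trunc_at_increment[OF c] by simp
  qed
  also have "(\<integral>t. (\<integral>\<omega>. f (t, \<omega>) \<partial>M) \<partial>lborel) =
      (\<integral>t. indicator {c1..c2} t * tail_balance M X t \<partial>lborel)"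
  proof (rule Bochner_Integration.integral_cong[OF refl])
    fix t :: real
    have "(\<integral>\<omega>. f (t, \<omega>) \<partial>M) = (\<integral>\<omega>. indicator {c1..c2} t *
        (indicator {\<omega>\<in>space M. t < X \<omega>} \<omega> - indicator {\<omega>\<in>space M. X \<omega> < -t} \<omega>) \<partial>M)"
      by (rule Bochner_Integration.integral_cong[OF refl]) (auto simp: f_def indicator_def)
    also have "\<dots> = indicator {c1..c2} t * tail_balance M X t"
      unfolding tail_balance_as_integral[OF P X] by simp
    finally show "(\<integral>\<omega>. f (t, \<omega>) \<partial>M) = indicator {c1..c2} t * tail_balance M X t" .
  qed
  finally show ?thesis
    using Bochner_Integration.integral_diff[OF integrable_trunc_at[OF P X] integrable_trunc_at[OF P X]] c
    by simp
qed

lemma truncated_mean_mono: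
  fixes X :: "'a \<Rightarrow> real"
  assumes "prob_space M" "X \<in> borel_measurable M" "0 \<le> c1" "c1 \<le> c2"
    and nonneg: "\<forall>t\<in>{c1..c2}. 0 \<le> tail_balance M X t"
  shows "(\<integral>\<omega>. trunc_at c1 (X \<omega>) \<partial>M) \<le> (\<integral>\<omega>. trunc_at c2 (X \<omega>) \<partial>M)"
proof -
  have "0 \<le> (\<integral>t. indicator {c1..c2} t * tail_balance M X t \<partial>lborel)"
    using nonneg by (intro Bochner_Integration.integral_nonneg) (simp add: indicator_def)
  then show ?thesis
    using truncated_mean_increment[OF assms(1-4)] by simp
qed

lemma truncated_mean_nonpos:
  fixes X :: "'a \<Rightarrow> real"
  assumes "prob_space M" "X \<in> borel_measurable M" "0 \<le> c"
    and nonpos: "\<forall>t\<in>{0..c}. tail_balance M X t \<le> 0"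
  shows "(\<integral>\<omega>. trunc_at c (X \<omega>) \<partial>M) \<le> 0"
proof -
  have "0 \<le> (\<integral>t. indicator {0..c} t * (- tail_balance M X t) \<partial>lborel)"
    using nonpos by (intro Bochner_Integration.integral_nonneg) (simp add: indicator_def)
  then show ?thesis
    using truncated_mean_increment[OF assms(1,2) order_refl assms(3)] by simp
qed

lemma truncated_mean_tendsto:
  fixes X :: "'a \<Rightarrow> real"
  assumes X[measurable]: "X \<in> borel_measurable M" and "integrable M X"
  shows "(\<lambda>n. \<integral>\<omega>. trunc_at (real n) (X \<omega>) \<partial>M) \<longlonglongrightarrow> (\<integral>\<omega>. X \<omega> \<partial>M)"
proof (rule integral_dominated_convergence[where w="\<lambda>\<omega>. \<bar>X \<omega>\<bar>"])
  show "integrable M (\<lambda>\<omega>. \<bar>X \<omega>\<bar>)"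
    using assms(2) by (rule integrable_abs)
  show "AE \<omega> in M. (\<lambda>n. trunc_at (real n) (X \<omega>)) \<longlonglongrightarrow> X \<omega>"
    by (intro AE_I2) (rule trunc_at_tendsto)
  show "AE \<omega> in M. norm (trunc_at (real n) (X \<omega>)) \<le> \<bar>X \<omega>\<bar>" for n
    by (intro AE_I2) (simp add: abs_trunc_at_le_abs)
qed simp_all

definition single_crossing :: "(real \<Rightarrow> real) \<Rightarrow> bool" where
  "single_crossing h \<longleftrightarrow> (\<forall>s t. 0 \<le> s \<longrightarrow> s \<le> t \<longrightarrow> 0 < h s \<longrightarrow> 0 \<le> h t)"

lemma heavy_on_left_if_single_crossing:
  fixes X :: "'a \<Rightarrow> real"
  assumes P: "prob_space M" and X: "X \<in> borel_measurable M" and Xi: "integrable M X"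
    and mean: "(\<integral>\<omega>. X \<omega> \<partial>M) = 0"
    and crossing: "single_crossing (tail_balance M X)"
  shows "heavy_on_left M X"
proof -
  have "(\<integral>\<omega>. trunc_at c (X \<omega>) \<partial>M) \<le> 0" if c: "0 < c" for c
  proof (cases "\<forall>t\<in>{0..c}. tail_balance M X t \<le> 0")
    case True
    then show ?thesis using truncated_mean_nonpos[OF P X] c by simp
  next
    case False
    then obtain s where "0 \<le> s" "s \<le> c" "0 < tail_balance M X s"
      by (auto simp: not_le)
    then have beyond_c: "0 \<le> tail_balance M X t" if "c \<le> t" for t
      using crossing that unfolding single_crossing_def by (meson order_trans)
    have "\<exists>N. \<forall>n\<ge>N. (\<integral>\<omega>. trunc_at c (X \<omega>) \<partial>M) \<le> (\<integral>\<omega>. trunc_at (real n) (X \<omega>) \<partial>M)"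
    proof (intro exI[of _ "nat \<lceil>c\<rceil>"] allI impI)
      fix n assume "nat \<lceil>c\<rceil> \<le> n"
      then have "c \<le> real n"
        using real_nat_ceiling_ge[of c] of_nat_mono[of "nat \<lceil>c\<rceil>" n] by linarith
      then show "(\<integral>\<omega>. trunc_at c (X \<omega>) \<partial>M) \<le> (\<integral>\<omega>. trunc_at (real n) (X \<omega>) \<partial>M)"
        using c beyond_c by (intro truncated_mean_mono[OF P X]) auto
    qed
    with truncated_mean_tendsto[OF X Xi] show ?thesis
      unfolding mean by (rule LIMSEQ_le_const)
  qed
  then show ?thesis
    unfolding heavy_on_left_def using Xi mean by auto
qed

subsection \<open>Variables with a density\<close>

definition interval_density :: "'a measure \<Rightarrow> ('a \<Rightarrow> real) \<Rightarrow> (real \<Rightarrow> real) \<Rightarrow> bool" where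
  "interval_density M Y g \<longleftrightarrow> (\<forall>c d. c \<le> d \<longrightarrow>
     emeasure M {\<omega>\<in>space M. c \<le> Y \<omega> \<and> Y \<omega> \<le> d} = (\<integral>\<^sup>+y. ennreal (g y) * indicator {c..d} y \<partial>lborel))"

lemma interval_density_if_distributed:
  assumes "distributed M lborel Y (\<lambda>y. ennreal (g y))"
  shows "interval_density M Y g"
  unfolding interval_density_def
proof (intro allI impI)
  fix c d :: real
  have "{\<omega>\<in>space M. c \<le> Y \<omega> \<and> Y \<omega> \<le> d} = Y -` {c..d} \<inter> space M"
    by auto
  then show "emeasure M {\<omega>\<in>space M. c \<le> Y \<omega> \<and> Y \<omega> \<le> d} =
      (\<integral>\<^sup>+y. ennreal (g y) * indicator {c..d} y \<partial>lborel)"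
    using distributed_emeasure[OF assms, of "{c..d}"] by simp
qed

lemma interval_density_no_atoms:
  assumes "interval_density M Y g"
  shows "measure M {\<omega>\<in>space M. Y \<omega> = x} = 0"
proof -
  have "emeasure M {\<omega>\<in>space M. Y \<omega> = x} = emeasure M {\<omega>\<in>space M. x \<le> Y \<omega> \<and> Y \<omega> \<le> x}"
    by (intro arg_cong[where f="emeasure M"]) auto
  also have "\<dots> = (\<integral>\<^sup>+y. ennreal (g x) * indicator {x} y \<partial>lborel)"
    using assms unfolding interval_density_def
    by (auto intro!: nn_integral_cong simp: indicator_def)
  also have "\<dots> = 0" by simp
  finally show ?thesis by (simp add: measure_def)
qed

lemma interval_density_around:
  assumes dens: "interval_density M Y g" and g[measurable]: "g \<in> borel_measurable borel"
    and t: "t1 \<le> t2"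
  shows "emeasure M {\<omega>\<in>space M. m + t1 \<le> Y \<omega> \<and> Y \<omega> \<le> m + t2} =
      (\<integral>\<^sup>+u. ennreal (g (m + u)) * indicator {t1..t2} u \<partial>lborel)"
    and "emeasure M {\<omega>\<in>space M. m - t2 \<le> Y \<omega> \<and> Y \<omega> \<le> m - t1} =
      (\<integral>\<^sup>+u. ennreal (g (m - u)) * indicator {t1..t2} u \<partial>lborel)"
proof -
  have "emeasure M {\<omega>\<in>space M. m + t1 \<le> Y \<omega> \<and> Y \<omega> \<le> m + t2} =
      (\<integral>\<^sup>+u. ennreal (g (m + u)) * indicator {m+t1..m+t2} (m + u) \<partial>lborel)"
    using dens t nn_integral_real_affine[of "\<lambda>y. ennreal (g y) * indicator {m+t1..m+t2} y" 1 m]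
    unfolding interval_density_def by simp
  also have "\<dots> = (\<integral>\<^sup>+u. ennreal (g (m + u)) * indicator {t1..t2} u \<partial>lborel)"
    by (auto intro!: nn_integral_cong simp: indicator_def)
  finally show "emeasure M {\<omega>\<in>space M. m + t1 \<le> Y \<omega> \<and> Y \<omega> \<le> m + t2} =
      (\<integral>\<^sup>+u. ennreal (g (m + u)) * indicator {t1..t2} u \<partial>lborel)" .
  have "emeasure M {\<omega>\<in>space M. m - t2 \<le> Y \<omega> \<and> Y \<omega> \<le> m - t1} =
      (\<integral>\<^sup>+u. ennreal (g (m - u)) * indicator {m-t2..m-t1} (m - u) \<partial>lborel)"
    using dens t nn_integral_real_affine[of "\<lambda>y. ennreal (g y) * indicator {m-t2..m-t1} y" "-1" m]
    unfolding interval_density_def by simp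
  also have "\<dots> = (\<integral>\<^sup>+u. ennreal (g (m - u)) * indicator {t1..t2} u \<partial>lborel)"
    by (auto intro!: nn_integral_cong simp: indicator_def)
  finally show "emeasure M {\<omega>\<in>space M. m - t2 \<le> Y \<omega> \<and> Y \<omega> \<le> m - t1} =
      (\<integral>\<^sup>+u. ennreal (g (m - u)) * indicator {t1..t2} u \<partial>lborel)" .
qed

lemma tail_balance_decrement:
  fixes Y :: "'a \<Rightarrow> real"
  assumes P: "prob_space M" and Y[measurable]: "Y \<in> borel_measurable M"
    and no_atoms: "\<And>x. measure M {\<omega>\<in>space M. Y \<omega> = x} = 0" and t: "t1 \<le> t2"
  shows "tail_balance M (\<lambda>\<omega>. Y \<omega> - m) t1 - tail_balance M (\<lambda>\<omega>. Y \<omega> - m) t2 =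
    measure M {\<omega>\<in>space M. m + t1 \<le> Y \<omega> \<and> Y \<omega> \<le> m + t2} -
    measure M {\<omega>\<in>space M. m - t2 \<le> Y \<omega> \<and> Y \<omega> \<le> m - t1}"
proof -
  interpret prob_space M by (rule P)
  define F where "F x = prob {\<omega>\<in>space M. Y \<omega> \<le> x}" for x
  have F_less: "prob {\<omega>\<in>space M. Y \<omega> < x} = F x" for x
  proof -
    have "F x = prob ({\<omega>\<in>space M. Y \<omega> < x} \<union> {\<omega>\<in>space M. Y \<omega> = x})"
      unfolding F_def by (intro arg_cong[where f=prob]) auto
    also have "\<dots> = prob {\<omega>\<in>space M. Y \<omega> < x} + prob {\<omega>\<in>space M. Y \<omega> = x}"
      by (rule finite_measure_Union) auto
    finally show ?thesis using no_atoms by simp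
  qed
  have F_greater: "prob {\<omega>\<in>space M. x < Y \<omega>} = 1 - F x" for x
  proof -
    have "{\<omega>\<in>space M. x < Y \<omega>} = space M - {\<omega>\<in>space M. Y \<omega> \<le> x}" by auto
    then show ?thesis unfolding F_def by (simp add: prob_compl)
  qed
  have F_interval: "prob {\<omega>\<in>space M. c \<le> Y \<omega> \<and> Y \<omega> \<le> d} = F d - F c" if "c \<le> d" for c d
  proof -
    have "F d = prob ({\<omega>\<in>space M. Y \<omega> < c} \<union> {\<omega>\<in>space M. c \<le> Y \<omega> \<and> Y \<omega> \<le> d})"
      unfolding F_def using that by (intro arg_cong[where f=prob]) auto
    also have "\<dots> = prob {\<omega>\<in>space M. Y \<omega> < c} + prob {\<omega>\<in>space M. c \<le> Y \<omega> \<and> Y \<omega> \<le> d}"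
      by (rule finite_measure_Union) auto
    finally show ?thesis using F_less by simp
  qed
  have balance: "tail_balance M (\<lambda>\<omega>. Y \<omega> - m) s = (1 - F (m + s)) - F (m - s)" for s
  proof -
    have "{\<omega>\<in>space M. s < Y \<omega> - m} = {\<omega>\<in>space M. m + s < Y \<omega>}"
      "{\<omega>\<in>space M. Y \<omega> - m < - s} = {\<omega>\<in>space M. Y \<omega> < m - s}"
      by auto
    then show ?thesis unfolding tail_balance_def using F_less F_greater by simp
  qed
  show ?thesis
    using t F_interval[of "m + t1" "m + t2"] F_interval[of "m - t2" "m - t1"]
    unfolding balance by simp
qed

lemma tail_balance_density_compare:
  fixes Y :: "'a \<Rightarrow> real"
  assumes P: "prob_space M" and Y: "Y \<in> borel_measurable M" and g: "g \<in> borel_measurable borel"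
    and dens: "interval_density M Y g" and t: "t1 \<le> t2"
  shows "(\<And>u. t1 \<le> u \<Longrightarrow> u \<le> t2 \<Longrightarrow> g (m + u) \<le> g (m - u)) \<Longrightarrow>
      tail_balance M (\<lambda>\<omega>. Y \<omega> - m) t1 \<le> tail_balance M (\<lambda>\<omega>. Y \<omega> - m) t2"
    and "(\<And>u. t1 \<le> u \<Longrightarrow> u \<le> t2 \<Longrightarrow> g (m - u) \<le> g (m + u)) \<Longrightarrow>
      tail_balance M (\<lambda>\<omega>. Y \<omega> - m) t2 \<le> tail_balance M (\<lambda>\<omega>. Y \<omega> - m) t1"
proof -
  interpret prob_space M by (rule P)
  define R where "R = {\<omega>\<in>space M. m + t1 \<le> Y \<omega> \<and> Y \<omega> \<le> m + t2}"
  define L where "L = {\<omega>\<in>space M. m - t2 \<le> Y \<omega> \<and> Y \<omega> \<le> m - t1}"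
  have decrement: "tail_balance M (\<lambda>\<omega>. Y \<omega> - m) t1 - tail_balance M (\<lambda>\<omega>. Y \<omega> - m) t2 =
      prob R - prob L"
    unfolding R_def L_def
    by (rule tail_balance_decrement[OF P Y interval_density_no_atoms[OF dens] t])
  have R: "ennreal (prob R) = (\<integral>\<^sup>+u. ennreal (g (m + u)) * indicator {t1..t2} u \<partial>lborel)"
    and L: "ennreal (prob L) = (\<integral>\<^sup>+u. ennreal (g (m - u)) * indicator {t1..t2} u \<partial>lborel)"
    using interval_density_around[OF dens g t, of m] unfolding R_def L_def
    by (simp_all add: emeasure_eq_measure)
  show "tail_balance M (\<lambda>\<omega>. Y \<omega> - m) t1 \<le> tail_balance M (\<lambda>\<omega>. Y \<omega> - m) t2"
    if "\<And>u. t1 \<le> u \<Longrightarrow> u \<le> t2 \<Longrightarrow> g (m + u) \<le> g (m - u)"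
  proof -
    have "ennreal (prob R) \<le> ennreal (prob L)"
      unfolding R L using that
      by (intro nn_integral_mono) (auto simp: indicator_def intro!: ennreal_leI)
    then show ?thesis using decrement by (simp add: ennreal_le_iff)
  qed
  show "tail_balance M (\<lambda>\<omega>. Y \<omega> - m) t2 \<le> tail_balance M (\<lambda>\<omega>. Y \<omega> - m) t1"
    if "\<And>u. t1 \<le> u \<Longrightarrow> u \<le> t2 \<Longrightarrow> g (m - u) \<le> g (m + u)"
  proof -
    have "ennreal (prob L) \<le> ennreal (prob R)"
      unfolding R L using that
      by (intro nn_integral_mono) (auto simp: indicator_def intro!: ennreal_leI)
    then show ?thesis using decrement by (simp add: ennreal_le_iff)
  qed
qed

lemma tail_balance_nonneg_far:
  fixes Y :: "'a \<Rightarrow> real"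
  assumes P: "prob_space M" and Y[measurable]: "Y \<in> borel_measurable M"
    and positive: "measure M {\<omega>\<in>space M. Y \<omega> \<le> 0} = 0" and T: "m \<le> T"
  shows "0 \<le> tail_balance M (\<lambda>\<omega>. Y \<omega> - m) T"
proof -
  interpret prob_space M by (rule P)
  have "prob {\<omega>\<in>space M. Y \<omega> - m < - T} \<le> prob {\<omega>\<in>space M. Y \<omega> \<le> 0}"
    using T by (intro finite_measure_mono) auto
  then show ?thesis
    unfolding tail_balance_def positive
    using measure_nonneg[of M "{\<omega>\<in>space M. T < Y \<omega> - m}"] by linarith
qed

definition reflected_single_crossing :: "(real \<Rightarrow> real) \<Rightarrow> bool" where
  "reflected_single_crossing g \<longleftrightarrow>
     (\<forall>m u v. 0 < u \<longrightarrow> u \<le> v \<longrightarrow> g (m - u) < g (m + u) \<longrightarrow> g (m - v) \<le> g (m + v))"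

text \<open>
  The shape of the density transfers to the tail balance of Y - m: as long as the left side
  of the density dominates, the balance increases; after the first crossing it decreases,
  but only towards its nonnegative value at distance m.
\<close>
lemma single_crossing_tail_balance:
  fixes Y :: "'a \<Rightarrow> real"
  assumes P: "prob_space M" and Y: "Y \<in> borel_measurable M" and g: "g \<in> borel_measurable borel"
    and positive: "measure M {\<omega>\<in>space M. Y \<omega> \<le> 0} = 0"
    and dens: "interval_density M Y g" and shape: "reflected_single_crossing g"
  shows "single_crossing (tail_balance M (\<lambda>\<omega>. Y \<omega> - m))"
  unfolding single_crossing_def
proof (intro allI impI)
  let ?h = "tail_balance M (\<lambda>\<omega>. Y \<omega> - m)"
  fix s t :: real assume s: "0 \<le> s" and st: "s \<le> t" and h_s: "0 < ?h s"
  show "0 \<le> ?h t"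
  proof (cases "\<forall>u. s \<le> u \<and> u \<le> t \<longrightarrow> g (m + u) \<le> g (m - u)")
    case True
    then have "?h s \<le> ?h t"
      by (intro tail_balance_density_compare(1)[OF P Y g dens st]) auto
    then show ?thesis using h_s by simp
  next
    case False
    then obtain u0 where u0: "s \<le> u0" "u0 \<le> t" "g (m - u0) < g (m + u0)"
      by (auto simp: not_le)
    then have "0 < u0" \<comment> \<open>at u0 = 0 both sides of the density coincide\<close>
      using s by (cases "u0 = 0") auto
    define T where "T = max t m"
    have "g (m - u) \<le> g (m + u)" if "t \<le> u" for u
      using shape \<open>0 < u0\<close> u0 that unfolding reflected_single_crossing_def by simp
    then have "?h T \<le> ?h t"
      unfolding T_def by (intro tail_balance_density_compare(2)[OF P Y g dens]) auto
    moreover have "0 \<le> ?h T"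
      unfolding T_def by (intro tail_balance_nonneg_far[OF P Y positive]) simp
    ultimately show ?thesis by simp
  qed
qed

lemma heavy_on_left_if_density_crossing:
  fixes Y :: "'a \<Rightarrow> real"
  assumes P: "prob_space M" and Y[measurable]: "Y \<in> borel_measurable M" and Yi: "integrable M Y"
    and g: "g \<in> borel_measurable borel"
    and positive: "measure M {\<omega>\<in>space M. Y \<omega> \<le> 0} = 0"
    and dens: "interval_density M Y g" and shape: "reflected_single_crossing g"
  shows "heavy_on_left M (\<lambda>\<omega>. Y \<omega> - (\<integral>\<omega>'. Y \<omega>' \<partial>M))"
proof (rule heavy_on_left_if_single_crossing[OF P])
  interpret prob_space M by (rule P)
  show "integrable M (\<lambda>\<omega>. Y \<omega> - (\<integral>\<omega>'. Y \<omega>' \<partial>M))"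
    using Yi by simp
  show "(\<integral>\<omega>. Y \<omega> - (\<integral>\<omega>'. Y \<omega>' \<partial>M) \<partial>M) = 0"
    using Yi by (simp add: prob_space)
  show "single_crossing (tail_balance M (\<lambda>\<omega>. Y \<omega> - (\<integral>\<omega>'. Y \<omega>' \<partial>M)))"
    by (rule single_crossing_tail_balance[OF P Y g positive dens shape])
qed simp

subsection \<open>Densities of exponential images\<close>

text \<open>If Z has density f, then k * exp Z (k > 0) has this density (substitute y = k * exp z).\<close>
definition exp_image_density :: "real \<Rightarrow> (real \<Rightarrow> real) \<Rightarrow> real \<Rightarrow> real" where
  "exp_image_density k f y = (if 0 < y then f (ln (y / k)) / y else 0)"

lemma exp_image_density_measurable:
  assumes [measurable]: "f \<in> borel_measurable borel"
  shows "exp_image_density k f \<in> borel_measurable borel"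
  unfolding exp_image_density_def[abs_def] by measurable

lemma exp_image_interval_density_pos:
  fixes Z Y :: "'a \<Rightarrow> real"
  assumes Z: "distributed M lborel Z (\<lambda>z. ennreal (f z))" and f[measurable]: "f \<in> borel_measurable borel"
    and k: "0 < k" and Y: "\<And>\<omega>. Y \<omega> = k * exp (Z \<omega>)" and cd: "0 < c" "c \<le> d"
  shows "emeasure M {\<omega>\<in>space M. c \<le> Y \<omega> \<and> Y \<omega> \<le> d} =
    (\<integral>\<^sup>+y. ennreal (exp_image_density k f y) * indicator {c..d} y \<partial>lborel)"
proof -
  define g where "g = exp_image_density k f"
  have [measurable]: "g \<in> borel_measurable borel"
    unfolding g_def by (rule exp_image_density_measurable[OF f])
  define \<alpha> where "\<alpha> = ln (c / k)"
  define \<beta> where "\<beta> = ln (d / k)"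
  have \<alpha>\<beta>: "\<alpha> \<le> \<beta>"
    unfolding \<alpha>_def \<beta>_def using cd k by (simp add: divide_right_mono)
  have exp_\<alpha>: "k * exp \<alpha> = c" and exp_\<beta>: "k * exp \<beta> = d"
    unfolding \<alpha>_def \<beta>_def using cd k by simp_all
  have "{\<omega>\<in>space M. c \<le> Y \<omega> \<and> Y \<omega> \<le> d} = Z -` {\<alpha>..\<beta>} \<inter> space M"
  proof -
    have "c \<le> k * exp z \<longleftrightarrow> \<alpha> \<le> z" "k * exp z \<le> d \<longleftrightarrow> z \<le> \<beta>" for z
      using exp_\<alpha> exp_\<beta> k by (metis exp_le_cancel_iff mult_le_cancel_left_pos)+
    then show ?thesis using Y by auto
  qed
  then have "emeasure M {\<omega>\<in>space M. c \<le> Y \<omega> \<and> Y \<omega> \<le> d} =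
      (\<integral>\<^sup>+z. ennreal (f z) * indicator {\<alpha>..\<beta>} z \<partial>lborel)"
    using distributed_emeasure[OF Z, of "{\<alpha>..\<beta>}"] by simp
  also have "\<dots> = (\<integral>\<^sup>+z. ennreal (g (k * exp z) * (k * exp z) * indicator {\<alpha>..\<beta>} z) \<partial>lborel)"
    using k by (intro nn_integral_cong) (auto simp: g_def exp_image_density_def indicator_def)
  also have "\<dots> = (\<integral>\<^sup>+y. ennreal (g y * indicator {k * exp \<alpha>..k * exp \<beta>} y) \<partial>lborel)"
  proof (rule nn_integral_substitution[symmetric, where g'="\<lambda>z. k * exp z"])
    show "set_borel_measurable borel {k * exp \<alpha>..k * exp \<beta>} g"
      unfolding set_borel_measurable_def by measurable
    show "((\<lambda>z. k * exp z) has_real_derivative k * exp x) (at x)" for x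
      by (auto intro!: derivative_eq_intros)
    show "continuous_on {\<alpha>..\<beta>} (\<lambda>z. k * exp z)"
      by (intro continuous_intros)
  qed (use k \<alpha>\<beta> in auto)
  also have "\<dots> = (\<integral>\<^sup>+y. ennreal (g y) * indicator {c..d} y \<partial>lborel)"
    unfolding exp_\<alpha> exp_\<beta> by (intro nn_integral_cong) (auto simp: indicator_def)
  finally show ?thesis unfolding g_def .
qed

text \<open>
  For a positive Y, the mass of {Y \<le> d} is the monotone limit of the masses of [d e^-n, d];
  so a density known on intervals of positive reals also gives the mass of (0, d].
\<close>
lemma emeasure_below_of_positive:
  fixes Y :: "'a \<Rightarrow> real"
  assumes Y[measurable]: "Y \<in> borel_measurable M" and positive: "\<And>\<omega>. 0 < Y \<omega>"
    and g[measurable]: "g \<in> borel_measurable borel" and d: "0 < d"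
    and dens_pos: "\<And>c. 0 < c \<Longrightarrow> c \<le> d \<Longrightarrow> emeasure M {\<omega>\<in>space M. c \<le> Y \<omega> \<and> Y \<omega> \<le> d} =
        (\<integral>\<^sup>+y. ennreal (g y) * indicator {c..d} y \<partial>lborel)"
  shows "emeasure M {\<omega>\<in>space M. Y \<omega> \<le> d} = (\<integral>\<^sup>+y. ennreal (g y) * indicator {0<..d} y \<partial>lborel)"
proof -
  define c where "c n = d * exp (- real n)" for n :: nat
  define A where "A n = {\<omega>\<in>space M. c n \<le> Y \<omega> \<and> Y \<omega> \<le> d}" for n
  have c_pos: "0 < c n" and c_le: "c n \<le> d" for n
    unfolding c_def using d by simp_all
  have "decseq c"
    unfolding c_def using d by (intro decseq_SucI) simp
  then have "incseq A" "incseq (\<lambda>n. {c n..d})"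
    unfolding A_def incseq_def decseq_def by (auto intro: order.trans)
  have eventually_below: "\<exists>n. c n \<le> y" if "0 < y" for y
  proof -
    obtain n :: nat where "- ln (y / d) \<le> real n" using real_arch_simple by blast
    then have "exp (- real n) \<le> exp (ln (y / d))" by simp
    then have "exp (- real n) \<le> y / d" using that d by simp
    then show ?thesis unfolding c_def using d by (auto simp: field_simps)
  qed
  have UA: "(\<Union>n. A n) = {\<omega>\<in>space M. Y \<omega> \<le> d}"
    unfolding A_def using eventually_below[OF positive] by blast
  have UI: "(\<Union>n. {c n..d}) = {0<..d}"
    using eventually_below c_pos by (auto intro: less_le_trans[OF c_pos])
  have "emeasure M {\<omega>\<in>space M. Y \<omega> \<le> d} = (SUP n. emeasure M (A n))"
    unfolding UA[symmetric] using \<open>incseq A\<close> unfolding A_def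
    by (intro SUP_emeasure_incseq[symmetric]) auto
  also have "\<dots> = (SUP n. emeasure (density lborel g) {c n..d})"
    unfolding A_def by (simp add: emeasure_density dens_pos[OF c_pos c_le])
  also have "\<dots> = emeasure (density lborel g) (\<Union>n. {c n..d})"
    using \<open>incseq (\<lambda>n. {c n..d})\<close> by (intro SUP_emeasure_incseq) auto
  also have "\<dots> = (\<integral>\<^sup>+y. ennreal (g y) * indicator {0<..d} y \<partial>lborel)"
    unfolding UI by (simp add: emeasure_density)
  finally show ?thesis .
qed

lemma interval_density_of_positive:
  fixes Y :: "'a \<Rightarrow> real"
  assumes Y: "Y \<in> borel_measurable M" and positive: "\<And>\<omega>. 0 < Y \<omega>"
    and g: "g \<in> borel_measurable borel" and g_nonpos: "\<And>y. y \<le> 0 \<Longrightarrow> g y = 0"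
    and dens_pos: "\<And>c d. 0 < c \<Longrightarrow> c \<le> d \<Longrightarrow> emeasure M {\<omega>\<in>space M. c \<le> Y \<omega> \<and> Y \<omega> \<le> d} =
        (\<integral>\<^sup>+y. ennreal (g y) * indicator {c..d} y \<partial>lborel)"
  shows "interval_density M Y g"
  unfolding interval_density_def
proof (intro allI impI)
  fix c d :: real assume cd: "c \<le> d"
  show "emeasure M {\<omega>\<in>space M. c \<le> Y \<omega> \<and> Y \<omega> \<le> d} =
      (\<integral>\<^sup>+y. ennreal (g y) * indicator {c..d} y \<partial>lborel)"
  proof (cases "0 < c")
    case True
    then show ?thesis using dens_pos cd by simp
  next
    case False
    then have "c \<le> Y \<omega>" for \<omega>
      using positive[of \<omega>] by linarith
    then have lower_bound_void: "{\<omega>\<in>space M. c \<le> Y \<omega> \<and> Y \<omega> \<le> d} = {\<omega>\<in>space M. Y \<omega> \<le> d}"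
      by auto
    have restrict: "(\<integral>\<^sup>+y. ennreal (g y) * indicator {c..d} y \<partial>lborel) =
        (\<integral>\<^sup>+y. ennreal (g y) * indicator {0<..d} y \<partial>lborel)"
      using False g_nonpos by (intro nn_integral_cong) (auto simp: indicator_def)
    show ?thesis
    proof (cases "0 < d")
      case True
      then show ?thesis
        unfolding lower_bound_void restrict
        by (intro emeasure_below_of_positive[OF Y positive g] dens_pos)
    next
      case False
      then have "\<not> Y \<omega> \<le> d" for \<omega>
        using positive[of \<omega>] by linarith
      then have empty: "{\<omega>\<in>space M. Y \<omega> \<le> d} = {}"
        by blast
      have "{0<..d} = {}"
        using False by simp
      then show ?thesis
        unfolding lower_bound_void restrict empty by simp
    qed
  qed
qed

lemma exp_image_interval_density:
  fixes Z Y :: "'a \<Rightarrow> real"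
  assumes Z: "distributed M lborel Z (\<lambda>z. ennreal (f z))" and f: "f \<in> borel_measurable borel"
    and k: "0 < k" and Y: "\<And>\<omega>. Y \<omega> = k * exp (Z \<omega>)"
  shows "interval_density M Y (exp_image_density k f)"
proof (rule interval_density_of_positive)
  have [measurable]: "Z \<in> borel_measurable M"
    using distributed_measurable[OF Z] by simp
  show "Y \<in> borel_measurable M"
    unfolding Y[abs_def] by measurable
  show "0 < Y \<omega>" for \<omega>
    using k Y by simp
  show "exp_image_density k f \<in> borel_measurable borel"
    by (rule exp_image_density_measurable[OF f])
  show "exp_image_density k f y = 0" if "y \<le> 0" for y
    using that by (simp add: exp_image_density_def)
qed (rule exp_image_interval_density_pos[OF Z f k Y])

lemma heavy_on_left_exp_image:
  fixes Y Z :: "'a \<Rightarrow> real"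
  assumes P: "prob_space M" and Z: "distributed M lborel Z (\<lambda>z. ennreal (f z))"
    and f: "f \<in> borel_measurable borel" and k: "0 < k" and Y: "\<forall>\<omega>. Y \<omega> = k * exp (Z \<omega>)"
    and Yi: "integrable M Y" and shape: "reflected_single_crossing (exp_image_density k f)"
  shows "heavy_on_left M (\<lambda>\<omega>. Y \<omega> - (\<integral>\<omega>'. Y \<omega>' \<partial>M))"
proof (rule heavy_on_left_if_density_crossing[OF P _ Yi exp_image_density_measurable[OF f] _ _ shape])
  show "Y \<in> borel_measurable M"
    using Yi by (rule borel_measurable_integrable)
  have no_nonpos: "{\<omega>\<in>space M. Y \<omega> \<le> 0} = {}"
    using Y k by (auto simp: not_le)
  show "measure M {\<omega>\<in>space M. Y \<omega> \<le> 0} = 0"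
    unfolding no_nonpos by simp
  show "interval_density M Y (exp_image_density k f)"
    using Y by (intro exp_image_interval_density[OF Z f k]) simp
qed

subsection \<open>Shape of the three densities\<close>

lemma gamma_density_measurable [measurable]: "gamma_density a l \<in> borel_measurable borel"
  unfolding gamma_density_def[abs_def] by measurable

lemma gamma_density_nonneg: "0 < a \<Longrightarrow> 0 \<le> gamma_density a l x"
  by (auto simp: gamma_density_def intro!: divide_nonneg_pos Gamma_real_pos)

lemma gamma_density_exp:
  assumes "0 < y"
  shows "gamma_density a l y = l powr a / Gamma a * exp ((a - 1) * ln y - l * y)"
proof -
  have "y powr (a - 1) = exp ((a - 1) * ln y)"
    using assms by (simp add: powr_def)
  moreover have "exp ((a - 1) * ln y - l * y) = exp ((a - 1) * ln y) * exp (- l * y)"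
    by (simp add: exp_add[symmetric] algebra_simps)
  ultimately show ?thesis
    unfolding gamma_density_def using assms by simp
qed

text \<open>
  \<psi>(u) = ln (m + u) - ln (m - u) is convex on [0, m), so \<psi>(u) / u is nondecreasing; this
  drives the single crossing of the Gamma density.
\<close>
lemma log_ratio_convex:
  fixes m :: real
  assumes "0 < m"
  shows "convex_on {0..<m} (\<lambda>x. ln (m + x) - ln (m - x))"
proof (rule convex_on_realI[where f'="\<lambda>x. 1 / (m + x) + 1 / (m - x)"])
  show "connected {0..<m}" by simp
  fix x assume "x \<in> {0..<m}"
  then show "((\<lambda>x. ln (m + x) - ln (m - x)) has_real_derivative 1 / (m + x) + 1 / (m - x)) (at x)"
    using assms by (auto intro!: derivative_eq_intros simp: field_simps)
next
  fix x y assume x: "x \<in> {0..<m}" and y: "y \<in> {0..<m}" and xy: "x \<le> y"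
  have sum_eq: "1 / (m + z) + 1 / (m - z) = 2 * m / ((m + z) * (m - z))" if "z \<in> {0..<m}" for z
    using that assms by (auto simp: field_simps)
  have "(m + y) * (m - y) \<le> (m + x) * (m - x)"
    using x y xy mult_mono[of x y x y] by (simp add: algebra_simps)
  moreover have "0 < (m + y) * (m - y)" using y assms by auto
  ultimately have "2 * m / ((m + x) * (m - x)) \<le> 2 * m / ((m + y) * (m - y))"
    using assms by (intro frac_le) auto
  then show "1 / (m + x) + 1 / (m - x) \<le> 1 / (m + y) + 1 / (m - y)"
    using sum_eq[OF x] sum_eq[OF y] by simp
qed

lemma log_ratio_slope_mono:
  fixes m u v :: real
  assumes "0 < u" "u \<le> v" "v < m"
  shows "v * (ln (m + u) - ln (m - u)) \<le> u * (ln (m + v) - ln (m - v))"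
proof -
  let ?\<psi> = "\<lambda>x. ln (m + x) - ln (m - x)"
  have "?\<psi> ((1 - u / v) *\<^sub>R 0 + (u / v) *\<^sub>R v) \<le> (1 - u / v) * ?\<psi> 0 + (u / v) * ?\<psi> v"
    by (rule convex_onD[OF log_ratio_convex]) (use assms in auto)
  then have "?\<psi> u \<le> (u / v) * ?\<psi> v"
    using assms by simp
  then have "v * ?\<psi> u \<le> v * ((u / v) * ?\<psi> v)"
    using assms by (intro mult_left_mono) auto
  then show ?thesis using assms by simp
qed

text \<open>
  Gamma: for m - v > 0, g(m + u) > g(m - u) means 2 l u < (a - 1) \<psi>(u); this forces a > 1,
  and then propagates from u to v \<ge> u because \<psi>(u) / u is nondecreasing.
\<close>
lemma gamma_density_crossing:
  assumes a: "0 < a" and l: "0 < l"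
  shows "reflected_single_crossing (gamma_density a l)"
  unfolding reflected_single_crossing_def
proof (intro allI impI)
  fix m u v :: real
  assume u: "0 < u" and uv: "u \<le> v" and lt: "gamma_density a l (m - u) < gamma_density a l (m + u)"
  show "gamma_density a l (m - v) \<le> gamma_density a l (m + v)"
  proof (cases "m - v \<le> 0")
    case True
    then show ?thesis using gamma_density_nonneg[OF a] by (simp add: gamma_density_def)
  next
    case False
    then have pos: "0 < m - v" "0 < m - u" "0 < m + u" "0 < m + v" using u uv by auto
    define K where "K = l powr a / Gamma a"
    have K: "0 < K" unfolding K_def using l Gamma_real_pos[OF a] by simp
    define E where "E y = (a - 1) * ln y - l * y" for y
    have density: "gamma_density a l y = K * exp (E y)" if "0 < y" for y
      unfolding K_def E_def using gamma_density_exp[OF that] .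
    define \<psi> where "\<psi> x = ln (m + x) - ln (m - x)" for x
    have "E (m - u) < E (m + u)" using lt density pos K by simp
    then have at_u: "2 * l * u < (a - 1) * \<psi> u"
      unfolding E_def \<psi>_def by (simp add: algebra_simps)
    have "0 < 2 * l * u" using l u by simp
    with at_u have "0 < (a - 1) * \<psi> u" by linarith
    moreover have "0 < \<psi> u" unfolding \<psi>_def using pos u by simp
    ultimately have "0 < a - 1" by (simp add: zero_less_mult_iff)
    have "u * (2 * l * v) = v * (2 * l * u)" by simp
    also have "\<dots> < v * ((a - 1) * \<psi> u)"
      using at_u u uv by (intro mult_strict_left_mono) auto
    also have "\<dots> = (a - 1) * (v * \<psi> u)" by simp
    also have "\<dots> \<le> (a - 1) * (u * \<psi> v)"
      using log_ratio_slope_mono[OF u uv] pos \<open>0 < a - 1\<close>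
      unfolding \<psi>_def by (intro mult_left_mono) auto
    also have "\<dots> = u * ((a - 1) * \<psi> v)" by simp
    finally have "2 * l * v < (a - 1) * \<psi> v"
      using u by (simp add: mult_less_cancel_left_pos)
    then have "E (m - v) < E (m + v)"
      unfolding E_def \<psi>_def by (simp add: algebra_simps)
    then show ?thesis using density pos K by simp
  qed
qed

text \<open>
  Pareto: the density vanishes below k and is decreasing above k, so g(m + u) > g(m - u)
  with m - u > 0 forces m - u < k; then also m - v < k and g(m - v) = 0.
\<close>
lemma pareto_density_crossing:
  assumes k: "0 < k" and l: "0 < l"
  shows "reflected_single_crossing (exp_image_density k (exponential_density l))"
  unfolding reflected_single_crossing_def
proof (intro allI impI)
  let ?g = "exp_image_density k (exponential_density l)"
  fix m u v :: real
  assume u: "0 < u" and uv: "u \<le> v" and lt: "?g (m - u) < ?g (m + u)"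
  have nonneg: "0 \<le> ?g y" for y
    unfolding exp_image_density_def using exponential_density_nonneg[OF l] by simp
  show "?g (m - v) \<le> ?g (m + v)"
  proof (cases "m - v \<le> 0")
    case True
    then show ?thesis using nonneg by (simp add: exp_image_density_def)
  next
    case False
    then have pos: "0 < m - v" "0 < m - u" "0 < m + u" using u uv by auto
    have "m - u < k"
    proof (rule ccontr)
      assume "\<not> m - u < k"
      then have ln_nonneg: "0 \<le> ln ((m - u) / k)" using k by simp
      have ln_le: "ln ((m - u) / k) \<le> ln ((m + u) / k)"
        using pos u k by (simp add: divide_right_mono)
      have "exp (- ln ((m + u) / k) * l) \<le> exp (- ln ((m - u) / k) * l)"
        using ln_le l by simp
      moreover have "1 / (m + u) \<le> 1 / (m - u)" using pos u by (simp add: frac_le)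
      ultimately have "l * exp (- ln ((m + u) / k) * l) * (1 / (m + u)) \<le>
          l * exp (- ln ((m - u) / k) * l) * (1 / (m - u))"
        using l pos by (intro mult_mono) auto
      then have "?g (m + u) \<le> ?g (m - u)"
        using ln_nonneg ln_le pos unfolding exp_image_density_def exponential_density_def by simp
      then show False using lt by simp
    qed
    then have "ln ((m - v) / k) < 0" using pos uv k by simp
    then have "?g (m - v) = 0" unfolding exp_image_density_def exponential_density_def by simp
    then show ?thesis using nonneg by simp
  qed
qed

text \<open>
  Log-normal: g(y) = C exp(Q(ln y)) with Q quadratic, and
  2 \<sigma>^2 (Q B - Q A) = (A - B)(A + B - 2 \<mu> + 2 \<sigma>^2).
\<close>
lemma lognormal_density_compare:
  assumes \<sigma>: "0 < \<sigma>" and w: "0 < w" "0 < m - w"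
  shows "exp_image_density 1 (normal_density \<mu> \<sigma>) (m - w) < exp_image_density 1 (normal_density \<mu> \<sigma>) (m + w)
    \<longleftrightarrow> ln (m - w) + ln (m + w) < 2 * \<mu> - 2 * \<sigma>\<^sup>2"
proof -
  let ?g = "exp_image_density 1 (normal_density \<mu> \<sigma>)"
  define C where "C = 1 / sqrt (2 * pi * \<sigma>\<^sup>2)"
  have C: "0 < C" unfolding C_def using \<sigma> by simp
  define Q where "Q t = - (t - \<mu>)\<^sup>2 / (2 * \<sigma>\<^sup>2) - t" for t
  have density: "?g y = C * exp (Q (ln y))" if "0 < y" for y
  proof -
    have "exp (Q (ln y)) = exp (- (ln y - \<mu>)\<^sup>2 / (2 * \<sigma>\<^sup>2)) / y"
      unfolding Q_def using that by (simp add: exp_diff)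
    then show ?thesis
      unfolding exp_image_density_def C_def normal_density_def using that by simp
  qed
  have Q_diff: "2 * \<sigma>\<^sup>2 * (Q B - Q A) = (A - B) * (A + B - 2 * \<mu> + 2 * \<sigma>\<^sup>2)" for A B
  proof -
    have "2 * \<sigma>\<^sup>2 * (Q B - Q A) = (A - \<mu>)\<^sup>2 - (B - \<mu>)\<^sup>2 + 2 * \<sigma>\<^sup>2 * (A - B)"
      unfolding Q_def using \<sigma> by (simp add: diff_divide_distrib right_diff_distrib)
    also have "\<dots> = (A - B) * (A + B - 2 * \<mu> + 2 * \<sigma>\<^sup>2)"
      by (simp add: power2_eq_square algebra_simps)
    finally show ?thesis .
  qed
  have "0 < 2 * \<sigma>\<^sup>2" using \<sigma> by simp
  have "ln (m - w) - ln (m + w) < 0" using w by simp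
  have "?g (m - w) < ?g (m + w) \<longleftrightarrow> Q (ln (m - w)) < Q (ln (m + w))"
    using density w C by simp
  also have "\<dots> \<longleftrightarrow> 0 < 2 * \<sigma>\<^sup>2 * (Q (ln (m + w)) - Q (ln (m - w)))"
    using \<open>0 < 2 * \<sigma>\<^sup>2\<close> by (simp add: zero_less_mult_iff)
  also have "\<dots> \<longleftrightarrow> 0 < (ln (m - w) - ln (m + w)) * (ln (m - w) + ln (m + w) - 2 * \<mu> + 2 * \<sigma>\<^sup>2)"
    by (simp only: Q_diff)
  also have "\<dots> \<longleftrightarrow> ln (m - w) + ln (m + w) < 2 * \<mu> - 2 * \<sigma>\<^sup>2"
    using \<open>ln (m - w) - ln (m + w) < 0\<close> by (auto simp: zero_less_mult_iff)
  finally show ?thesis .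
qed

text \<open>Since ln (m - u) + ln (m + u) = ln (m^2 - u^2) decreases in u, a crossing persists.\<close>
lemma lognormal_density_crossing:
  assumes \<sigma>: "0 < \<sigma>"
  shows "reflected_single_crossing (exp_image_density 1 (normal_density \<mu> \<sigma>))"
  unfolding reflected_single_crossing_def
proof (intro allI impI)
  let ?g = "exp_image_density 1 (normal_density \<mu> \<sigma>)"
  fix m u v :: real
  assume u: "0 < u" and uv: "u \<le> v" and lt: "?g (m - u) < ?g (m + u)"
  show "?g (m - v) \<le> ?g (m + v)"
  proof (cases "m - v \<le> 0")
    case True
    then show ?thesis by (simp add: exp_image_density_def)
  next
    case False
    then have pos: "0 < m - v" "0 < m - u" "0 < m + u" "0 < m + v" using u uv by auto
    have "ln (m - v) + ln (m + v) \<le> ln (m - u) + ln (m + u)"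
    proof -
      have "(m - v) * (m + v) \<le> (m - u) * (m + u)"
        using u uv mult_mono[of u v u v] by (simp add: algebra_simps)
      then have "ln ((m - v) * (m + v)) \<le> ln ((m - u) * (m + u))"
        using pos by simp
      then show ?thesis using pos by (simp add: ln_mult)
    qed
    moreover have "ln (m - u) + ln (m + u) < 2 * \<mu> - 2 * \<sigma>\<^sup>2"
      using lt lognormal_density_compare[OF \<sigma> u pos(2)] by simp
    ultimately have "ln (m - v) + ln (m + v) < 2 * \<mu> - 2 * \<sigma>\<^sup>2"
      by linarith
    then have "?g (m - v) < ?g (m + v)"
      using lognormal_density_compare[OF \<sigma> _ pos(1)] u uv by simp
    then show ?thesis by simp
  qed
qed

lemma gamma_distributed_positive:
  assumes Y: "distributed M lborel Y (gamma_density a l)"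
  shows "measure M {\<omega>\<in>space M. Y \<omega> \<le> 0} = 0"
proof -
  have "{\<omega>\<in>space M. Y \<omega> \<le> 0} = Y -` {..0} \<inter> space M"
    by auto
  then have "emeasure M {\<omega>\<in>space M. Y \<omega> \<le> 0} =
      (\<integral>\<^sup>+y. ennreal (gamma_density a l y) * indicator {..0} y \<partial>lborel)"
    using distributed_emeasure[OF Y, of "{..0}"] by simp
  also have "\<dots> = 0"
    by (subst nn_integral_0_iff_AE) (auto simp: gamma_density_def indicator_def)
  finally show ?thesis by (simp add: measure_def)
qed

theorem mainTheorem14:
  fixes M :: "'a measure"
  assumes "prob_space M"
  shows
    "(\<forall>(Y :: 'a \<Rightarrow> real) a l. 0 < a \<and> 0 < l \<and>
        distributed M lborel Y (gamma_density a l) \<and> integrable M Y \<longrightarrow>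
        heavy_on_left M (\<lambda>\<omega>. Y \<omega> - (\<integral>\<omega>'. Y \<omega>' \<partial>M)))
   \<and> (\<forall>(Y :: 'a \<Rightarrow> real) (Z :: 'a \<Rightarrow> real) a l. 0 < a \<and> 0 < l \<and>
        distributed M lborel Z (exponential_density l) \<and> (\<forall>\<omega>. Y \<omega> = a * exp (Z \<omega>)) \<and>
        integrable M Y \<longrightarrow>
        heavy_on_left M (\<lambda>\<omega>. Y \<omega> - (\<integral>\<omega>'. Y \<omega>' \<partial>M)))
   \<and> (\<forall>(Y :: 'a \<Rightarrow> real) (Z :: 'a \<Rightarrow> real) \<mu> \<sigma>. 0 < \<sigma> \<and>
        distributed M lborel Z (normal_density \<mu> \<sigma>) \<and> (\<forall>\<omega>. Y \<omega> = exp (Z \<omega>)) \<and>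
        integrable M Y \<longrightarrow>
        heavy_on_left M (\<lambda>\<omega>. Y \<omega> - (\<integral>\<omega>'. Y \<omega>' \<partial>M)))"
proof (intro conjI allI impI; elim conjE)
  fix Y :: "'a \<Rightarrow> real" and a l :: real
  assume a: "0 < a" and l: "0 < l" and Y: "distributed M lborel Y (gamma_density a l)"
    and Yi: "integrable M Y"
  show "heavy_on_left M (\<lambda>\<omega>. Y \<omega> - (\<integral>\<omega>'. Y \<omega>' \<partial>M))"
  proof (rule heavy_on_left_if_density_crossing[OF assms _ Yi gamma_density_measurable])
    show "Y \<in> borel_measurable M"
      using Yi by (rule borel_measurable_integrable)
    show "measure M {\<omega>\<in>space M. Y \<omega> \<le> 0} = 0"
      by (rule gamma_distributed_positive[OF Y])
    show "interval_density M Y (gamma_density a l)"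
      by (rule interval_density_if_distributed[OF Y])
    show "reflected_single_crossing (gamma_density a l)"
      by (rule gamma_density_crossing[OF a l])
  qed
next
  fix Y Z :: "'a \<Rightarrow> real" and a l :: real
  assume a: "0 < a" and l: "0 < l" and Z: "distributed M lborel Z (exponential_density l)"
    and Y: "\<forall>\<omega>. Y \<omega> = a * exp (Z \<omega>)" and Yi: "integrable M Y"
  show "heavy_on_left M (\<lambda>\<omega>. Y \<omega> - (\<integral>\<omega>'. Y \<omega>' \<partial>M))"
    by (rule heavy_on_left_exp_image[OF assms Z borel_measurable_erlang_density a Y Yi
          pareto_density_crossing[OF a l]])
next
  fix Y Z :: "'a \<Rightarrow> real" and \<mu> \<sigma> :: real
  assume \<sigma>: "0 < \<sigma>" and Z: "distributed M lborel Z (normal_density \<mu> \<sigma>)"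
    and Y: "\<forall>\<omega>. Y \<omega> = exp (Z \<omega>)" and Yi: "integrable M Y"
  have "\<forall>\<omega>. Y \<omega> = 1 * exp (Z \<omega>)"
    using Y by simp
  then show "heavy_on_left M (\<lambda>\<omega>. Y \<omega> - (\<integral>\<omega>'. Y \<omega>' \<partial>M))"
    by (rule heavy_on_left_exp_image[OF assms Z borel_measurable_normal_density zero_less_one _ Yi
          lognormal_density_crossing[OF \<sigma>]])
qed

end
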